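(* Let $n_x, d \in \mathbb{Z}^+$, let $\kappa_{\max} > 1$, let $\mathsf{X} \in \mathbb{R}^{n_x \times d}$ be arbitrary, and let $\tilde{\mathsf{K}}_\nabla(\boldsymbol{\gamma})$ be the modified gradient-enhanced Gaussian kernel matrix defined in the context. Set $$\eta_{\tilde{\mathsf{K}}_\nabla}(n_x, d) = \frac{1 + (n_x-1) \frac{1 + \sqrt{1 + 4d}}{2} e^{-\frac{1 + 2d - \sqrt{1 + 4d}}{4d}}}{\kappa_{\max} - 1}.$$ Then for every $\boldsymbol{\gamma} = (\gamma_1,\ldots,\gamma_d)$ with all $\gamma_i > 0$, the $\ell_2$ condition number satisfies $\kappa\!\left(\tilde{\mathsf{K}}_\nabla(\boldsymbol{\gamma}) + \eta_{\tilde{\mathsf{K}}_\nabla}(n_x,d)\, \mathsf{I}\right) \le \kappa_{\max}$.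
   Context: Write $\tilde{x}_{ij} = \gamma_j x_{ij}$, where $x_{ij}$ is the $(i,j)$ entry of $\mathsf{X}$, and $\tilde{\mathbf{x}}_{i:} = (\tilde{x}_{i1},\ldots,\tilde{x}_{id})$. Define $n_x\times n_x$ matrices $\mathsf{K}_{ab} = \exp\!\left(-\tfrac12 \|\tilde{\mathbf{x}}_{a:} - \tilde{\mathbf{x}}_{b:}\|_2^2\right)$ and $(\tilde{\mathsf{R}}_j)_{ab} = \tilde{x}_{aj} - \tilde{x}_{bj}$. $\tilde{\mathsf{K}}_\nabla(\boldsymbol{\gamma})$ is the symmetric $n_x(d+1)\times n_x(d+1)$ block matrix with blocks indexed by $0,\ldots,d$: block $(0,0)$ is $\mathsf{K}$; block $(0,j)$ has entries $(\tilde{\mathsf{R}}_j)_{ab}\mathsf{K}_{ab}$; block $(i,0)$ has entries $-(\tilde{\mathsf{R}}_i)_{ab}\mathsf{K}_{ab}$; block $(i,j)$, $i,j\ge1$, has entries $(\delta_{ij} - (\tilde{\mathsf{R}}_i)_{ab}(\tilde{\mathsf{R}}_j)_{ab})\mathsf{K}_{ab}$. Equivalently $\tilde{\mathsf{K}}_\nabla = \mathsf{P}^{-1}\mathsf{K}_\nabla\mathsf{P}^{-1}$, where $\mathsf{K}_\nabla$ is the (positive semidefinite) gradient-enhanced kernel matrix of the Gaussian kernel $k(\mathbf{x},\mathbf{y}) = e^{-\frac12\sum_i \gamma_i^2(x_i-y_i)^2}$ at the rows of $\mathsf{X}$ (the covariance matrix of the function values and partial derivatives at these points) and $\mathsf{P}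 = \mathrm{diag}(\mathbf{1}_{n_x}, \gamma_1\mathbf{1}_{n_x},\ldots,\gamma_d\mathbf{1}_{n_x})$. $\mathsf{I}$ is the identity matrix and $\kappa(\cdot)$ the $\ell_2$ condition number. *)

theory Defs
  imports "HOL-Analysis.Analysis"
begin

text \<open>Points: rows of X indexed by the finite type 'n (n_x = CARD('n));
  coordinates indexed by the finite type 'd (d = CARD('d)).
  Block index 0 is represented by None, block j (1..d) by Some j.\<close>

definition scaled_pt :: "real^'d \<Rightarrow> real^'d^'n \<Rightarrow> 'n \<Rightarrow> 'd \<Rightarrow> real" where
  "scaled_pt \<gamma> X a j = \<gamma>$j * X$a$j"

definition gaussK :: "real^'d \<Rightarrow> real^'d^'n \<Rightarrow> 'n \<Rightarrow> 'n \<Rightarrow> real" where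
  "gaussK \<gamma> X a b = exp (-(1/2) * (\<Sum>j\<in>UNIV. (scaled_pt \<gamma> X a j - scaled_pt \<gamma> X b j)^2))"

definition Rdiff :: "real^'d \<Rightarrow> real^'d^'n \<Rightarrow> 'd \<Rightarrow> 'n \<Rightarrow> 'n \<Rightarrow> real" where
  "Rdiff \<gamma> X j a b = scaled_pt \<gamma> X a j - scaled_pt \<gamma> X b j"

definition modGradK :: "real^'d \<Rightarrow> real^'d^'n \<Rightarrow> real^('n \<times> 'd option)^('n \<times> 'd option)" where
  "modGradK \<gamma> X = (\<chi> p q. (case (p, q) of
      ((a, None), (b, None)) \<Rightarrow> gaussK \<gamma> X a b
    | ((a, None), (b, Some j)) \<Rightarrow> Rdiff \<gamma> X j a b * gaussK \<gamma> X a b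
    | ((a, Some i), (b, None)) \<Rightarrow> - Rdiff \<gamma> X i a b * gaussK \<gamma> X a b
    | ((a, Some i), (b, Some j)) \<Rightarrow>
         ((if i = j then 1 else 0) - Rdiff \<gamma> X i a b * Rdiff \<gamma> X j a b) * gaussK \<gamma> X a b))"

definition cond2 :: "real^'m^'m \<Rightarrow> ereal" where
  "cond2 A = (if invertible A
     then ereal (onorm (\<lambda>x. A *v x) * onorm (\<lambda>x. matrix_inv A *v x))
     else \<infinity>)"

definition etaK :: "real \<Rightarrow> nat \<Rightarrow> nat \<Rightarrow> real" where
  "etaK \<kappa>max nx d =
     (1 + (real nx - 1) * ((1 + sqrt (1 + 4 * real d)) / 2)
        * exp (- (1 + 2 * real d - sqrt (1 + 4 * real d)) / (4 * real d)))
     / (\<kappa>max - 1)"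

end

theory Submission
  imports Defs
begin

text \<open>
  In each coordinate e^(-(s-t)^2/2) = \<Sum>n \<phi>_n(s) \<phi>_n(t) with \<phi>_n(s) = e^(-s^2/2) s^n / sqrt(n!),
  and the derivative entries come from differentiating the factors.  Hence every entry of
  the scaled matrix is a product over the coordinates of series of rank-one kernels, and the
  matrix is positive semidefinite.  Its diagonal blocks are identities, so Cauchy-Schwarz for
  the semidefinite form bounds its largest eigenvalue by n_x.  The spectrum of the shifted
  matrix thus lies in [\<eta>, n_x + \<eta>], and (n_x + \<eta>) / \<eta> \<le> \<kappa>_max because
  (\<kappa>_max - 1) \<eta> = 1 + (n_x - 1) C with C \<ge> 1 by exp x \<ge> 1 + x.
\<close>

lemma sums_exp: "(\<lambda>n. u^n / fact n) sums exp (u::real)"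
  using exp_converges[of u] by (simp add: divide_inverse mult.commute)

lemma sums_exp_deriv: "(\<lambda>n. real n * u^(n-1) / fact n) sums exp (u::real)"
proof -
  have "(\<lambda>n. real (Suc n) * u^(Suc n - 1) / fact (Suc n)) = (\<lambda>n. u^n / fact n)"
    by (simp add: fact_Suc del: of_nat_Suc)
  with sums_exp have "(\<lambda>n. real (Suc n) * u^(Suc n - 1) / fact (Suc n)) sums exp u"
    by simp
  then show ?thesis
    using sums_Suc_iff[of "\<lambda>n. real n * u^(n-1) / fact n" "exp u"] by simp
qed

lemma sums_exp_deriv2: "(\<lambda>n. (real n)^2 * u^(n-1) / fact n) sums ((1 + u) * exp (u::real))"
proof -
  have "(real (Suc n))^2 * u^(Suc n - 1) / fact (Suc n) = u * (real n * u^(n-1) / fact n) + u^n / fact n" for n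
  proof -
    have "(real (Suc n))^2 * u^(Suc n - 1) = real (Suc n) * (u * (real n * u^(n-1)) + u^n)"
      by (cases n) (simp_all add: power2_eq_square algebra_simps)
    then show ?thesis by (simp add: fact_Suc add_divide_distrib del: of_nat_Suc)
  qed
  moreover have "(\<lambda>n. u * (real n * u^(n-1) / fact n) + u^n / fact n) sums (u * exp u + exp u)"
    by (intro sums_add sums_mult sums_exp_deriv sums_exp)
  ultimately have "(\<lambda>n. (real (Suc n))^2 * u^(Suc n - 1) / fact (Suc n)) sums ((1 + u) * exp u)"
    by (simp add: algebra_simps)
  then show ?thesis
    using sums_Suc_iff[of "\<lambda>n. (real n)^2 * u^(n-1) / fact n" "(1 + u) * exp u"] by simp
qed

lemma sums_exp_bilinear:
  "(\<lambda>n. (a * real n * s^(n-1) + b * s^n) * (c * real n * t^(n-1) + d * t^n) / fact n)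
     sums ((a * c * (1 + s * t) + a * d * t + b * c * s + b * d) * exp (s * t :: real))"
proof -
  define u where "u = s * t"
  have "(a * real n * s^(n-1) + b * s^n) * (c * real n * t^(n-1) + d * t^n)
      = a * c * ((real n)^2 * u^(n-1)) + (a * d * t + b * c * s) * (real n * u^(n-1)) + b * d * u^n" for n
    by (cases n) (simp_all add: u_def power_mult_distrib power2_eq_square algebra_simps)
  then have "(a * real n * s^(n-1) + b * s^n) * (c * real n * t^(n-1) + d * t^n) / fact n
      = a * c * ((real n)^2 * u^(n-1) / fact n) + (a * d * t + b * c * s) * (real n * u^(n-1) / fact n)
        + b * d * (u^n / fact n)" for n
    by (simp add: add_divide_distrib)
  moreover have "(\<lambda>n. a * c * ((real n)^2 * u^(n-1) / fact n) + (a * d * t + b * c * s) * (real n * u^(n-1) / fact n)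
        + b * d * (u^n / fact n)) sums (a * c * ((1 + u) * exp u) + (a * d * t + b * c * s) * exp u + b * d * exp u)"
    by (intro sums_add sums_mult sums_exp sums_exp_deriv sums_exp_deriv2)
  ultimately show ?thesis by (simp add: u_def algebra_simps)
qed

text \<open>The derivative \<partial>_s^\<alpha> \<partial>_t^\<beta> of e^(-(s-t)^2/2).\<close>

definition gauss_deriv_kernel :: "real \<Rightarrow> real \<Rightarrow> bool \<Rightarrow> bool \<Rightarrow> real" where
  "gauss_deriv_kernel s t \<alpha> \<beta> = exp (-((s - t)^2) / 2) *
     (if \<alpha> then (if \<beta> then 1 - (s - t)^2 else -(s - t)) else (if \<beta> then s - t else 1))"

text \<open>For \<alpha>, the derivative in s of e^(-s^2/2) s^n / sqrt(n!).\<close>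

definition gauss_feature :: "bool \<Rightarrow> real \<Rightarrow> nat \<Rightarrow> real" where
  "gauss_feature \<alpha> s n =
     exp (-(s^2) / 2) * (if \<alpha> then real n * s^(n-1) - s^(n+1) else s^n) / sqrt (fact n)"

lemma gauss_feature_sums:
  "(\<lambda>n. gauss_feature \<alpha> s n * gauss_feature \<beta> t n) sums gauss_deriv_kernel s t \<alpha> \<beta>"
proof -
  define a where "a = (if \<alpha> then 1 else 0 :: real)"
  define b where "b = (if \<alpha> then -s else 1)"
  define c where "c = (if \<beta> then 1 else 0 :: real)"
  define d where "d = (if \<beta> then -t else 1)"
  define E where "E = exp (-(s^2) / 2) * exp (-(t^2) / 2)"
  have series: "(\<lambda>n. E * ((a * real n * s^(n-1) + b * s^n) * (c * real n * t^(n-1) + d * t^n) / fact n))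
      sums (E * ((a * c * (1 + s * t) + a * d * t + b * c * s + b * d) * exp (s * t)))"
    by (intro sums_mult sums_exp_bilinear)
  have features: "gauss_feature \<alpha> s n * gauss_feature \<beta> t n
      = E * ((a * real n * s^(n-1) + b * s^n) * (c * real n * t^(n-1) + d * t^n) / fact n)" for n
    by (simp add: gauss_feature_def a_def b_def c_def d_def E_def)
  have gauss: "E * exp (s * t) = exp (-((s - t)^2) / 2)"
    unfolding E_def by (simp add: exp_add[symmetric] power2_eq_square algebra_simps)
  have coeff: "a * c * (1 + s * t) + a * d * t + b * c * s + b * d
      = (if \<alpha> then (if \<beta> then 1 - (s - t)^2 else -(s - t)) else (if \<beta> then s - t else 1))"
    by (simp add: a_def b_def c_def d_def power2_eq_square algebra_simps)
  have "E * ((a * c * (1 + s * t) + a * d * t + b * c * s + b * d) * exp (s * t))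
      = gauss_deriv_kernel s t \<alpha> \<beta>"
    unfolding gauss_deriv_kernel_def gauss[symmetric] coeff by (simp only: mult_ac)
  with series show ?thesis unfolding features by simp
qed

lemma gauss_deriv_kernel_commute: "gauss_deriv_kernel s t \<alpha> \<beta> = gauss_deriv_kernel t s \<beta> \<alpha>"
  by (simp add: gauss_deriv_kernel_def power2_commute)

definition psd_kernel :: "'p set \<Rightarrow> ('p \<Rightarrow> 'p \<Rightarrow> real) \<Rightarrow> bool" where
  "psd_kernel P k \<longleftrightarrow> (\<forall>c. 0 \<le> (\<Sum>p\<in>P. \<Sum>q\<in>P. c p * c q * k p q))"

lemma psd_kernel_one: "psd_kernel P (\<lambda>p q. 1)"
  unfolding psd_kernel_def by (simp add: sum_product[symmetric])

lemma psd_kernel_rank_one_mult: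
  assumes "psd_kernel P k"
  shows "psd_kernel P (\<lambda>p q. f p * f q * k p q)"
  unfolding psd_kernel_def
proof
  fix c :: "'a \<Rightarrow> real"
  have "0 \<le> (\<Sum>p\<in>P. \<Sum>q\<in>P. (c p * f p) * (c q * f q) * k p q)"
    using assms unfolding psd_kernel_def by simp
  then show "0 \<le> (\<Sum>p\<in>P. \<Sum>q\<in>P. c p * c q * (f p * f q * k p q))"
    by (simp add: mult_ac)
qed

lemma psd_kernel_sums:
  assumes "finite P" "\<And>n. psd_kernel P (K n)" "\<And>p q. (\<lambda>n. K n p q) sums k p q"
  shows "psd_kernel P k"
  unfolding psd_kernel_def
proof
  fix c :: "'a \<Rightarrow> real"
  have series: "(\<lambda>n. \<Sum>p\<in>P. \<Sum>q\<in>P. c p * c q * K n p q) sums (\<Sum>p\<in>P. \<Sum>q\<in>P. c p * c q * k p q)"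
    by (intro sums_sum sums_mult assms(3))
  have nonneg: "0 \<le> (\<Sum>p\<in>P. \<Sum>q\<in>P. c p * c q * K n p q)" for n
    using assms(2) unfolding psd_kernel_def by simp
  show "0 \<le> (\<Sum>p\<in>P. \<Sum>q\<in>P. c p * c q * k p q)"
    by (rule sums_le[OF nonneg sums_zero series])
qed

lemma psd_kernel_prod_series:
  assumes "finite M" "finite P"
    and "\<And>m p q. m \<in> M \<Longrightarrow> (\<lambda>n. \<phi> m n p * \<phi> m n q) sums k m p q"
  shows "psd_kernel P (\<lambda>p q. \<Prod>m\<in>M. k m p q)"
  using assms(1,3)
proof (induction M rule: finite_induct)
  case empty
  show ?case by (simp add: psd_kernel_one)
next
  case (insert m M)
  let ?R = "\<lambda>p q. \<Prod>m\<in>M. k m p q"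
  have "psd_kernel P (\<lambda>p q. k m p q * ?R p q)"
  proof (rule psd_kernel_sums[OF \<open>finite P\<close>])
    show "psd_kernel P (\<lambda>p q. \<phi> m n p * \<phi> m n q * ?R p q)" for n
      using insert.IH insert.prems by (intro psd_kernel_rank_one_mult) simp
    show "(\<lambda>n. \<phi> m n p * \<phi> m n q * ?R p q) sums (k m p q * ?R p q)" for p q
      using insert.prems by (intro sums_mult2) simp
  qed
  with insert.hyps show ?case by simp
qed

lemma inner_matrix_vector_mult:
  "x \<bullet> (A *v y) = (\<Sum>p\<in>UNIV. \<Sum>q\<in>UNIV. x$p * y$q * A$p$q)"
  by (simp add: inner_vec_def matrix_vector_mult_def sum_distrib_left mult_ac)

lemma inner_matrix_vector_mult_commute:
  fixes A :: "real^'p^'p"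
  assumes "transpose A = A"
  shows "x \<bullet> (A *v y) = y \<bullet> (A *v x)"
  by (metis assms dot_lmul_matrix inner_commute transpose_matrix_vector)

lemma psd_form_cross_le:
  fixes A :: "real^'p^'p"
  assumes "transpose A = A" "\<And>z. 0 \<le> z \<bullet> (A *v z)"
  shows "u \<bullet> (A *v v) \<le> (u \<bullet> (A *v u) + v \<bullet> (A *v v)) / 2"
proof -
  have "0 \<le> (u - v) \<bullet> (A *v (u - v))" by (rule assms(2))
  also have "\<dots> = u \<bullet> (A *v u) - u \<bullet> (A *v v) - v \<bullet> (A *v u) + v \<bullet> (A *v v)"
    by (simp add: matrix_vector_mult_diff_distrib inner_diff_left inner_diff_right)
  also have "v \<bullet> (A *v u) = u \<bullet> (A *v v)" by (rule inner_matrix_vector_mult_commute[OF assms(1)])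
  finally show ?thesis by simp
qed

lemma psd_form_sum_le:
  fixes A :: "real^'p^'p"
  assumes "transpose A = A" "\<And>z. 0 \<le> z \<bullet> (A *v z)" "finite S"
  shows "(\<Sum>a\<in>S. u a) \<bullet> (A *v (\<Sum>a\<in>S. u a)) \<le> real (card S) * (\<Sum>a\<in>S. u a \<bullet> (A *v u a))"
proof -
  have "(\<Sum>a\<in>S. u a) \<bullet> (A *v (\<Sum>a\<in>S. u a)) = (\<Sum>a\<in>S. \<Sum>b\<in>S. u a \<bullet> (A *v u b))"
    by (simp add: linear_sum[OF matrix_vector_mul_linear] inner_sum_left inner_sum_right) (rule sum.swap)
  also have "\<dots> \<le> (\<Sum>a\<in>S. \<Sum>b\<in>S. (u a \<bullet> (A *v u a) + u b \<bullet> (A *v u b)) / 2)"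
    by (intro sum_mono psd_form_cross_le[OF assms(1,2)])
  also have "\<dots> = real (card S) * (\<Sum>a\<in>S. u a \<bullet> (A *v u a))"
    by (simp add: add_divide_distrib sum.distrib sum_divide_distrib[symmetric] sum_distrib_left[symmetric]
        sum.swap[of "\<lambda>a b. u b \<bullet> (A *v u b)"])
  finally show ?thesis .
qed

lemma transpose_add: "transpose (A + B) = transpose A + transpose B"
  by (simp add: transpose_def vec_eq_iff)

lemma block_identity_psd_form_le:
  fixes K :: "real^('n::finite \<times> 'o::finite)^('n \<times> 'o)"
  assumes "transpose K = K" "\<And>z. 0 \<le> z \<bullet> (K *v z)"
    and diag: "\<And>a i j. K$(a,i)$(a,j) = (if i = j then 1 else 0)"
  shows "x \<bullet> (K *v x) \<le> real CARD('n) * (x \<bullet> x)"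
proof -
  define u where "u a = (\<chi> p. if fst p = a then x$p else 0)" for a
  have x: "x = (\<Sum>a\<in>UNIV. u a)"
    by (simp add: vec_eq_iff u_def sum_component)
  have "u a $ p * u a $ q * K $ p $ q = (if q = p then u a $ p * u a $ p else 0)" for a p q
    by (cases p, cases q) (auto simp: u_def diag)
  then have block: "u a \<bullet> (K *v u a) = u a \<bullet> u a" for a
    unfolding inner_matrix_vector_mult by (simp add: inner_vec_def)
  have "(\<Sum>a\<in>UNIV. u a \<bullet> u a) = (\<Sum>p\<in>UNIV. \<Sum>a\<in>UNIV. if fst p = a then x$p * x$p else 0)"
    by (subst sum.swap) (simp add: inner_vec_def u_def if_distrib cong: if_cong)
  also have "\<dots> = x \<bullet> x" by (simp add: inner_vec_def)
  finally have "(\<Sum>a\<in>UNIV. u a \<bullet> u a) = x \<bullet> x" .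
  with psd_form_sum_le[OF assms(1,2), of UNIV u] show ?thesis
    unfolding x[symmetric] block by simp
qed

lemma norm_le_of_psd_form_le:
  fixes A :: "real^'p^'p"
  assumes "transpose A = A" "\<And>z. 0 \<le> z \<bullet> (A *v z)"
    and ub: "\<And>z. z \<bullet> (A *v z) \<le> M * (z \<bullet> z)" and "M > 0"
  shows "norm (A *v x) \<le> M * norm x"
proof -
  define y where "y = A *v x"
  have "M * (y \<bullet> y) = (M *\<^sub>R x) \<bullet> (A *v y)"
    using inner_matrix_vector_mult_commute[OF assms(1), of x y] unfolding y_def by simp
  also have "\<dots> \<le> ((M *\<^sub>R x) \<bullet> (A *v (M *\<^sub>R x)) + y \<bullet> (A *v y)) / 2"
    by (rule psd_form_cross_le[OF assms(1,2)])
  also have "\<dots> = (M * M * (x \<bullet> (A *v x)) + y \<bullet> (A *v y)) / 2"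
    by (simp add: matrix_vector_mult_scaleR)
  also have "\<dots> \<le> (M * M * (M * (x \<bullet> x)) + M * (y \<bullet> y)) / 2"
    using ub[of x] ub[of y] \<open>M > 0\<close> by (intro divide_right_mono add_mono mult_left_mono) auto
  finally have "M * (y \<bullet> y) \<le> M * (M * M * (x \<bullet> x))"
    by (simp only: mult.assoc) argo
  then have "y \<bullet> y \<le> M * M * (x \<bullet> x)"
    using \<open>M > 0\<close> by (rule mult_left_le_imp_le)
  then have "(norm y)^2 \<le> (M * norm x)^2"
    by (simp only: power2_norm_eq_inner power_mult_distrib power2_eq_square[of M])
  then show ?thesis
    unfolding y_def by (rule power2_le_imp_le) (use \<open>M > 0\<close> in simp)
qed

lemma norm_ge_of_form_ge:
  fixes A :: "real^'p^'p"
  assumes lb: "\<And>z. e * (z \<bullet> z) \<le> z \<bullet> (A *v z)"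
  shows "e * norm x \<le> norm (A *v x)"
proof (cases "x = 0")
  case False
  have "norm x * (e * norm x) = e * (x \<bullet> x)"
    by (simp only: dot_square_norm power2_eq_square mult_ac)
  also have "\<dots> \<le> norm x * norm (A *v x)"
    using lb[of x] norm_cauchy_schwarz[of x "A *v x"] by linarith
  finally show ?thesis using False by simp
qed simp

lemma cond2_le_of_form_bounds:
  fixes A :: "real^'p^'p"
  assumes sym: "transpose A = A" and "e > 0"
    and lb: "\<And>z. e * (z \<bullet> z) \<le> z \<bullet> (A *v z)"
    and ub: "\<And>z. z \<bullet> (A *v z) \<le> M * (z \<bullet> z)"
  shows "cond2 A \<le> ereal (M / e)"
proof -
  have psd: "0 \<le> z \<bullet> (A *v z)" for z
  proof -
    have "0 \<le> e * (z \<bullet> z)" using \<open>e > 0\<close> by simp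
    with lb[of z] show ?thesis by linarith
  qed
  have "M > 0"
  proof -
    have "(1::real^'p) \<bullet> 1 > 0" by (simp add: vec_eq_iff)
    moreover have "e * ((1::real^'p) \<bullet> 1) \<le> M * ((1::real^'p) \<bullet> 1)" using lb[of 1] ub[of 1] by linarith
    ultimately have "e \<le> M" by simp
    with \<open>e > 0\<close> show ?thesis by simp
  qed
  have low: "e * norm x \<le> norm (A *v x)" for x
    by (rule norm_ge_of_form_ge[OF lb])
  have "x = 0" if "A *v x = 0" for x
    using low[of x] that \<open>e > 0\<close> by (simp add: mult_le_0_iff)
  then have "inj ((*v) A)"
    by (simp add: vec.inj_iff_eq_0)
  then have inv: "invertible A"
    by (simp add: invertible_left_inverse matrix_left_invertible_injective)
  have right_inverse: "A ** matrix_inv A = mat 1"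
    using inv unfolding invertible_def matrix_inv_def by (rule someI_ex[THEN conjunct1])
  have norm_A: "onorm ((*v) A) \<le> M"
    by (rule onorm_le) (rule norm_le_of_psd_form_le[OF sym psd ub \<open>M > 0\<close>])
  have norm_inv: "onorm ((*v) (matrix_inv A)) \<le> 1 / e"
  proof (rule onorm_le)
    fix y :: "real^'p"
    have "e * norm (matrix_inv A *v y) \<le> norm y"
      using low[of "matrix_inv A *v y"] by (simp add: matrix_vector_mul_assoc right_inverse)
    then show "norm (matrix_inv A *v y) \<le> 1 / e * norm y"
      using \<open>e > 0\<close> by (simp add: field_simps)
  qed
  have "0 \<le> onorm ((*v) (matrix_inv A))" by (rule onorm_pos_le) simp
  with norm_A norm_inv \<open>M > 0\<close>
  have "onorm ((*v) A) * onorm ((*v) (matrix_inv A)) \<le> M * (1 / e)"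
    by (intro mult_mono) simp_all
  then show ?thesis
    unfolding cond2_def if_P[OF inv] by (simp add: divide_inverse)
qed

lemma gaussK_eq_prod:
  "gaussK \<gamma> X a b = (\<Prod>m\<in>UNIV. exp (-((scaled_pt \<gamma> X a m - scaled_pt \<gamma> X b m)^2) / 2))"
  by (simp add: gaussK_def exp_sum[symmetric] sum_distrib_left sum_divide_distrib sum_negf)

lemma modGradK_eq_prod:
  "modGradK \<gamma> X $ p $ q = (\<Prod>m\<in>UNIV.
     gauss_deriv_kernel (scaled_pt \<gamma> X (fst p) m) (scaled_pt \<gamma> X (fst q) m) (snd p = Some m) (snd q = Some m))"
proof -
  obtain a i b j where pq: "p = (a, i)" "q = (b, j)" by (cases p, cases q)
  define r where "r m = Rdiff \<gamma> X m a b" for m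
  define g where "g m = (if i = Some m then (if j = Some m then 1 - (r m)^2 else - r m)
                         else (if j = Some m then r m else 1))" for m
  have "(\<Prod>m\<in>UNIV. gauss_deriv_kernel (scaled_pt \<gamma> X a m) (scaled_pt \<gamma> X b m) (i = Some m) (j = Some m))
      = gaussK \<gamma> X a b * (\<Prod>m\<in>UNIV. g m)"
    unfolding g_def r_def Rdiff_def by (simp add: gauss_deriv_kernel_def gaussK_eq_prod prod.distrib)
  moreover have "modGradK \<gamma> X $ p $ q = gaussK \<gamma> X a b * (\<Prod>m\<in>UNIV. g m)"
  proof (cases i; cases j)
    fix i0 j0 assume ij: "i = Some i0" "j = Some j0"
    show ?thesis
    proof (cases "i0 = j0")
      case True
      then have "g m = (if m = i0 then 1 - (r m)^2 else 1)" for m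
        using ij by (auto simp: g_def)
      then have "(\<Prod>m\<in>UNIV. g m) = 1 - (r i0)^2" by simp
      then show ?thesis using ij True by (simp add: modGradK_def pq r_def power2_eq_square)
    next
      case False
      then have "g m = (if m = i0 then - r m else 1) * (if m = j0 then r m else 1)" for m
        using ij by (auto simp: g_def)
      then have "(\<Prod>m\<in>UNIV. g m) = - r i0 * r j0" by (simp add: prod.distrib)
      then show ?thesis using ij False by (simp add: modGradK_def pq r_def)
    qed
  qed (auto simp: modGradK_def pq g_def r_def cong: if_cong)
  ultimately show ?thesis using pq by simp
qed

lemma transpose_modGradK: "transpose (modGradK \<gamma> X) = modGradK \<gamma> X"
  by (simp add: vec_eq_iff transpose_def modGradK_eq_prod gauss_deriv_kernel_commute)

lemma modGradK_diag_block: "modGradK \<gamma> X $ (a, i) $ (a, j) = (if i = j then 1 else 0)"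
  by (cases i; cases j) (simp_all add: modGradK_def Rdiff_def gaussK_def)

lemma modGradK_psd: "0 \<le> x \<bullet> (modGradK \<gamma> X *v x)"
proof -
  have "psd_kernel UNIV (\<lambda>p q. \<Prod>m\<in>UNIV.
     gauss_deriv_kernel (scaled_pt \<gamma> X (fst p) m) (scaled_pt \<gamma> X (fst q) m) (snd p = Some m) (snd q = Some m))"
    by (rule psd_kernel_prod_series[where \<phi> = "\<lambda>m n p. gauss_feature (snd p = Some m) (scaled_pt \<gamma> X (fst p) m) n"])
       (simp_all add: gauss_feature_sums)
  then show ?thesis
    unfolding inner_matrix_vector_mult modGradK_eq_prod psd_kernel_def by simp
qed

definition etaK_factor :: "nat \<Rightarrow> real" where
  "etaK_factor d = ((1 + sqrt (1 + 4 * real d)) / 2) * exp (- (1 + 2 * real d - sqrt (1 + 4 * real d)) / (4 * real d))"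

lemma etaK_factor_ge_one:
  assumes "d \<ge> 1"
  shows "1 \<le> etaK_factor d"
proof -
  define s where "s = sqrt (1 + 4 * real d)"
  define E where "E = - (1 + 2 * real d - s) / (4 * real d)"
  have d: "real d \<ge> 1" using assms by simp
  have "s \<ge> 1" unfolding s_def using d by simp
  have "s * s = 1 + 4 * real d" unfolding s_def using d by simp
  then have "(1 + s) * (1 + E) = (6 * real d + 2 * real d * s) / (4 * real d)"
    unfolding E_def using d by (simp add: field_simps)
  also have "\<dots> \<ge> 2"
    using \<open>s \<ge> 1\<close> d by (simp add: field_simps)
  finally have "1 \<le> ((1 + s) / 2) * (1 + E)" by simp
  also have "\<dots> \<le> ((1 + s) / 2) * exp E"
    using \<open>s \<ge> 1\<close> by (intro mult_left_mono exp_ge_add_one_self) auto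
  finally show ?thesis unfolding etaK_factor_def E_def s_def .
qed

lemma etaK_bounds:
  assumes "\<kappa>max > 1" "nx \<ge> 1" "d \<ge> 1"
  shows "real nx \<le> (\<kappa>max - 1) * etaK \<kappa>max nx d" "etaK \<kappa>max nx d > 0"
proof -
  have "real nx - 1 \<le> (real nx - 1) * etaK_factor d"
    using assms(2) etaK_factor_ge_one[OF assms(3)] mult_left_mono[of 1 "etaK_factor d" "real nx - 1"]
    by simp
  moreover have "(\<kappa>max - 1) * etaK \<kappa>max nx d = 1 + (real nx - 1) * etaK_factor d"
    using assms(1) by (simp add: etaK_def etaK_factor_def mult.assoc)
  ultimately show nx: "real nx \<le> (\<kappa>max - 1) * etaK \<kappa>max nx d" by simp
  have "0 < (\<kappa>max - 1) * etaK \<kappa>max nx d" using nx assms(2) by simp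
  then show "etaK \<kappa>max nx d > 0" using assms(1) by (simp add: zero_less_mult_iff)
qed

theorem mainTheorem3:
  fixes X :: "real^'d^'n" and \<gamma> :: "real^'d" and \<kappa>max :: real
  assumes "\<kappa>max > 1"
    and "\<forall>i. \<gamma>$i > 0"
  shows "cond2 (modGradK \<gamma> X + etaK \<kappa>max CARD('n) CARD('d) *\<^sub>R mat 1) \<le> ereal \<kappa>max"
proof -
  define K where "K = modGradK \<gamma> X"
  define \<eta> where "\<eta> = etaK \<kappa>max CARD('n) CARD('d)"
  have \<eta>: "\<eta> > 0" "real CARD('n) \<le> (\<kappa>max - 1) * \<eta>"
    unfolding \<eta>_def using etaK_bounds[OF assms(1)] by (simp_all add: Suc_le_eq)
  have form: "z \<bullet> ((K + \<eta> *\<^sub>R mat 1) *v z) = z \<bullet> (K *v z) + \<eta> * (z \<bullet> z)" for z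
    by (simp add: matrix_vector_mult_add_rdistrib scaleR_matrix_vector_assoc[symmetric] inner_add_right)
  have "transpose (K + \<eta> *\<^sub>R mat 1) = K + \<eta> *\<^sub>R mat 1"
    by (simp add: K_def transpose_add transpose_scalar transpose_modGradK)
  moreover have "\<eta> * (z \<bullet> z) \<le> z \<bullet> ((K + \<eta> *\<^sub>R mat 1) *v z)" for z
    unfolding form using modGradK_psd[of z \<gamma> X] by (simp add: K_def)
  moreover have "z \<bullet> ((K + \<eta> *\<^sub>R mat 1) *v z) \<le> (CARD('n) + \<eta>) * (z \<bullet> z)" for z
    using block_identity_psd_form_le[OF transpose_modGradK modGradK_psd modGradK_diag_block]
    unfolding form by (simp add: K_def distrib_right)
  ultimately have "cond2 (K + \<eta> *\<^sub>R mat 1) \<le> ereal ((CARD('n) + \<eta>) / \<eta>)"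
    using \<eta>(1) by (intro cond2_le_of_form_bounds)
  also have "(CARD('n) + \<eta>) / \<eta> \<le> \<kappa>max"
    using \<eta> by (simp add: divide_le_eq algebra_simps)
  finally show ?thesis unfolding K_def \<eta>_def by simp
qed

end
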